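(* There exists an absolute constant $C>0$ such that for all $A\ge1$, $N>0$, $R>0$, with $\phi$ defined by $\widehat\phi=R(\mathbf 1_{N+I_A}+\mathbf 1_{2N+I_A})$, one has $$\big|\operatorname{supp}\widehat{U_k[\phi](t)}\big|\le C^kA\quad\text{for all }k\ge1,\ t\ge0,$$ where $|\cdot|$ denotes Lebesgue measure. (The bound is independent of $N$.)
   Context: $I_A=[-\frac A2,\frac A2)$; $\widehat f(\xi)=\int e^{-ix\xi}f(x)dx$; $|D|$ is the Fourier multiplier with symbol $|\xi|$; $\mu\in\{-1,1\}$. $U_1[\phi](t)=e^{-it|D|}\phi$ and for $k\ge2$, $U_k[\phi](t)=-i\mu\sum_{k_1+k_2+k_3=k,\ k_i\ge1}\int_0^te^{-i(t-\tau)|D|}(U_{k_1}[\phi]\overline{U_{k_2}[\phi]}U_{k_3}[\phi])(\tau)d\tau$. *)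

theory Defs
  imports "HOL-Analysis.Analysis"
begin

text \<open>The Fourier transform convention is
  hat f (xi) = integral of exp(-i x xi) f(x) dx. Then
  hat(f * conj g * h)(xi) = (2 pi)^(-2) double integral of
  hat f(xi1) * conj(hat g(xi2)) * hat h(xi - xi1 + xi2) d xi1 d xi2,
  and the multiplier exp(-i t |D|) acts as multiplication by exp(-i t |xi|).\<close>

definition I_int :: "real \<Rightarrow> real set" where
  "I_int A = {-A/2..<A/2}"

definition phi_hat :: "real \<Rightarrow> real \<Rightarrow> real \<Rightarrow> real \<Rightarrow> complex" where
  "phi_hat A N R \<xi> = complex_of_real
     (R * (indicator ((\<lambda>x. N + x) ` I_int A) \<xi> + indicator ((\<lambda>x. 2*N + x) ` I_int A) \<xi>))"

text \<open>Uhat mu ph k t xi is the Fourier transform at xi of U_k[phi](t), where ph = hat phi.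
  The index set k1+k2+k3 = k, ki >= 1 is enumerated as k1 in [1,k), k2 in [1,k-k1),
  k3 = k - k1 - k2.\<close>
function Uhat :: "real \<Rightarrow> (real \<Rightarrow> complex) \<Rightarrow> nat \<Rightarrow> real \<Rightarrow> real \<Rightarrow> complex" where
  "Uhat \<mu> ph 0 t \<xi> = 0"
| "Uhat \<mu> ph (Suc 0) t \<xi> = exp (- \<i> * complex_of_real (t * \<bar>\<xi>\<bar>)) * ph \<xi>"
| "Uhat \<mu> ph (Suc (Suc n)) t \<xi> =
     - \<i> * complex_of_real \<mu> *
     (\<Sum>k1\<in>{1..<Suc (Suc n)}. \<Sum>k2\<in>{1..<Suc (Suc n) - k1}.
        (LINT \<tau>:{0..t}|lborel.
           exp (- \<i> * complex_of_real ((t - \<tau>) * \<bar>\<xi>\<bar>)) *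
           (complex_of_real (1 / (2*pi)^2) *
            (LINT \<xi>1|lborel. LINT \<xi>2|lborel.
               Uhat \<mu> ph k1 \<tau> \<xi>1 * cnj (Uhat \<mu> ph k2 \<tau> \<xi>2) *
               Uhat \<mu> ph (Suc (Suc n) - k1 - k2) \<tau> (\<xi> - \<xi>1 + \<xi>2)))))"
  by pat_completeness auto
termination
  by (relation "Wellfounded.measure (\<lambda>(\<mu>, ph, k, t, \<xi>). k)") auto

end

theory Submission
  imports Defs
begin

text \<open>The support of \<open>Uhat k\<close> only propagates through the trilinear convolution
  \<open>\<xi> = \<xi>1 - \<xi>2 + \<xi>3\<close>, \<open>k = k1 + k2 + k3\<close>. Since \<open>phi_hat\<close> lives on the two
  windows of width \<open>A\<close> around \<open>N\<close> and \<open>2N\<close>, induction on \<open>k\<close> puts the support of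
  \<open>Uhat k\<close> inside the \<open>4k + 1\<close> windows of width \<open>kA\<close> around \<open>jN\<close>, \<open>|j| \<le> 2k\<close>.
  Their total length \<open>(4k + 1) k A\<close> is at most \<open>5^k A\<close>, uniformly in \<open>N\<close>.
  The argument is pointwise: off that set every integrand in the Duhamel term vanishes
  identically, so no integrability of the iterates is needed.\<close>

lemma Uhat_Suc_Suc_eq_0:
  assumes "\<And>k1 k2 \<tau> \<xi>1 \<xi>2. k1 \<in> {1..<Suc (Suc n)} \<Longrightarrow> k2 \<in> {1..<Suc (Suc n) - k1} \<Longrightarrow>
      Uhat \<mu> ph k1 \<tau> \<xi>1 * cnj (Uhat \<mu> ph k2 \<tau> \<xi>2) *
      Uhat \<mu> ph (Suc (Suc n) - k1 - k2) \<tau> (\<xi> - \<xi>1 + \<xi>2) = 0"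
  shows "Uhat \<mu> ph (Suc (Suc n)) t \<xi> = 0"
  unfolding Uhat.simps(3)
  by (intro mult_eq_0_iff[THEN iffD2] disjI2 sum.neutral ballI) (simp only: assms, simp)

lemma Uhat_support_subset:
  fixes S :: "nat \<Rightarrow> real set"
  assumes support_ph: "\<And>\<xi>. ph \<xi> \<noteq> 0 \<Longrightarrow> \<xi> \<in> S 1"
    and S_diff_add: "\<And>k1 k2 k3 a b c. a \<in> S k1 \<Longrightarrow> b \<in> S k2 \<Longrightarrow> c \<in> S k3 \<Longrightarrow>
      a - b + c \<in> S (k1 + k2 + k3)"
  shows "Uhat \<mu> ph k t \<xi> \<noteq> 0 \<Longrightarrow> \<xi> \<in> S k"
proof (induction k arbitrary: t \<xi> rule: less_induct)
  case (less k)
  consider "k = 0" | "k = 1" | n where "k = Suc (Suc n)"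
    by (metis One_nat_def not0_implies_Suc)
  then show ?case
  proof cases
    case 1
    with less.prems show ?thesis by simp
  next
    case 2
    with less.prems support_ph show ?thesis by simp
  next
    case (3 n)
    show ?thesis
    proof (rule ccontr)
      assume \<xi>_notin: "\<xi> \<notin> S k"
      have "Uhat \<mu> ph k1 \<tau> \<xi>1 * cnj (Uhat \<mu> ph k2 \<tau> \<xi>2) * Uhat \<mu> ph (k - k1 - k2) \<tau> (\<xi> - \<xi>1 + \<xi>2) = 0"
        if "k1 \<in> {1..<k}" "k2 \<in> {1..<k - k1}" for k1 k2 \<tau> \<xi>1 \<xi>2
      proof (rule ccontr)
        assume "\<not> ?thesis"
        then have "\<xi>1 \<in> S k1" "\<xi>2 \<in> S k2" "\<xi> - \<xi>1 + \<xi>2 \<in> S (k - k1 - k2)"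
          using less.IH that by auto
        then have "\<xi>1 - \<xi>2 + (\<xi> - \<xi>1 + \<xi>2) \<in> S (k1 + k2 + (k - k1 - k2))"
          by (rule S_diff_add)
        moreover have "k1 + k2 + (k - k1 - k2) = k"
          using that by auto
        ultimately show False
          using \<xi>_notin by simp
      qed
      then have "Uhat \<mu> ph k t \<xi> = 0"
        unfolding 3 by (rule Uhat_Suc_Suc_eq_0)
      with less.prems show False by simp
    qed
  qed
qed

definition frequency_clusters :: "real \<Rightarrow> real \<Rightarrow> nat \<Rightarrow> real set" where
  "frequency_clusters N r k = (\<Union>j\<in>{-2 * int k..2 * int k}. cball (of_int j * N) (real k * r))"

lemma mem_frequency_clusters_iff:
  "\<xi> \<in> frequency_clusters N r k \<longleftrightarrow>
    (\<exists>j::int. \<bar>j\<bar> \<le> 2 * int k \<and> \<bar>\<xi> - of_int j * N\<bar> \<le> real k * r)"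
  by (auto simp: frequency_clusters_def dist_real_def abs_minus_commute abs_le_iff)

lemma frequency_clusters_diff_add:
  assumes "a \<in> frequency_clusters N r k1" "b \<in> frequency_clusters N r k2"
    "c \<in> frequency_clusters N r k3"
  shows "a - b + c \<in> frequency_clusters N r (k1 + k2 + k3)"
proof -
  obtain j1 j2 j3 :: int where
    "\<bar>j1\<bar> \<le> 2 * int k1" "\<bar>a - of_int j1 * N\<bar> \<le> real k1 * r"
    "\<bar>j2\<bar> \<le> 2 * int k2" "\<bar>b - of_int j2 * N\<bar> \<le> real k2 * r"
    "\<bar>j3\<bar> \<le> 2 * int k3" "\<bar>c - of_int j3 * N\<bar> \<le> real k3 * r"
    using assms unfolding mem_frequency_clusters_iff by blast
  moreover have "a - b + c - of_int (j1 - j2 + j3) * N =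
      (a - of_int j1 * N) - (b - of_int j2 * N) + (c - of_int j3 * N)"
    by (simp add: algebra_simps)
  ultimately have "\<bar>j1 - j2 + j3\<bar> \<le> 2 * int (k1 + k2 + k3)"
    "\<bar>a - b + c - of_int (j1 - j2 + j3) * N\<bar> \<le> real (k1 + k2 + k3) * r"
    by (auto simp: distrib_right)
  then show ?thesis
    unfolding mem_frequency_clusters_iff by blast
qed

lemma closed_frequency_clusters: "closed (frequency_clusters N r k)"
  unfolding frequency_clusters_def by (intro closed_UN) auto

lemma emeasure_frequency_clusters_le:
  assumes "r \<ge> 0"
  shows "emeasure lborel (frequency_clusters N r k) \<le> ennreal (real ((4 * k + 1) * k) * (2 * r))"
proof -
  have "emeasure lborel (frequency_clusters N r k)
      \<le> (\<Sum>j\<in>{-2 * int k..2 * int k}. emeasure lborel (cball (of_int j * N) (real k * r)))"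
    unfolding frequency_clusters_def by (intro emeasure_subadditive_finite) auto
  also have "\<dots> = (\<Sum>j\<in>{-2 * int k..2 * int k}. ennreal (2 * real k * r))"
    using assms by (simp add: cball_eq_atLeastAtMost mult_ac)
  also have "\<dots> = ennreal (\<Sum>j\<in>{-2 * int k..2 * int k}. 2 * real k * r)"
    using assms by (intro sum_ennreal) simp
  also have "\<dots> = ennreal (real ((4 * k + 1) * k) * (2 * r))"
    by (simp add: algebra_simps)
  finally show ?thesis .
qed

lemma phi_hat_support:
  assumes "phi_hat A N R \<xi> \<noteq> 0"
  shows "\<xi> \<in> frequency_clusters N (A / 2) 1"
proof -
  have "\<xi> \<in> (\<lambda>x. N + x) ` I_int A \<or> \<xi> \<in> (\<lambda>x. 2 * N + x) ` I_int A"
    using assms by (auto simp: phi_hat_def indicator_def split: if_splits)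
  then have "\<exists>j \<in> {1, 2 :: int}. \<bar>\<xi> - of_int j * N\<bar> \<le> A / 2"
    by (auto simp: I_int_def abs_if)
  then obtain j :: int where "j \<in> {1, 2}" "\<bar>\<xi> - of_int j * N\<bar> \<le> A / 2"
    by blast
  then show ?thesis
    unfolding mem_frequency_clusters_iff by (intro exI[of _ j]) auto
qed

lemma four_k_plus_one_times_k_le_five_pow: "k \<ge> 1 \<Longrightarrow> real ((4 * k + 1) * k) \<le> 5 ^ k"
proof (induction k rule: dec_induct)
  case base
  then show ?case by simp
next
  case (step k)
  have "16 * k \<le> 16 * (k * k)"
    using step(1) by simp
  have "(4 * Suc k + 1) * Suc k = 4 * (k * k) + 9 * k + 5"
    by (simp add: algebra_simps)
  also have "\<dots> \<le> 20 * (k * k) + 5 * k"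
    using \<open>16 * k \<le> 16 * (k * k)\<close> step(1) by linarith
  also have "\<dots> = 5 * ((4 * k + 1) * k)"
    by (simp add: algebra_simps)
  finally have "(4 * Suc k + 1) * Suc k \<le> 5 * ((4 * k + 1) * k)" .
  then have "real ((4 * Suc k + 1) * Suc k) \<le> 5 * real ((4 * k + 1) * k)"
    by (metis of_nat_le_iff of_nat_mult of_nat_numeral)
  also have "\<dots> \<le> 5 * 5 ^ k"
    using step(3) by simp
  finally show ?case by simp
qed

theorem lemma5p6:
  shows "\<exists>C::real. C > 0 \<and>
    (\<forall>\<mu>::real. \<forall>A::real. \<forall>N::real. \<forall>R::real. \<forall>k::nat. \<forall>t::real.
       \<mu> \<in> {-1, 1} \<longrightarrow> A \<ge> 1 \<longrightarrow> N > 0 \<longrightarrow> R > 0 \<longrightarrow> k \<ge> 1 \<longrightarrow> t \<ge> 0 \<longrightarrow>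
       emeasure lborel (closure {\<xi>. Uhat \<mu> (phi_hat A N R) k t \<xi> \<noteq> 0})
         \<le> ennreal (C ^ k * A))"
proof (intro exI[of _ 5] conjI allI impI)
  fix \<mu> A N R t :: real and k :: nat
  assume "A \<ge> 1" and "k \<ge> 1"
  have "{\<xi>. Uhat \<mu> (phi_hat A N R) k t \<xi> \<noteq> 0} \<subseteq> frequency_clusters N (A / 2) k"
    using phi_hat_support frequency_clusters_diff_add by (blast intro: Uhat_support_subset)
  then have "closure {\<xi>. Uhat \<mu> (phi_hat A N R) k t \<xi> \<noteq> 0} \<subseteq> frequency_clusters N (A / 2) k"
    by (rule closure_minimal) (rule closed_frequency_clusters)
  then have "emeasure lborel (closure {\<xi>. Uhat \<mu> (phi_hat A N R) k t \<xi> \<noteq> 0})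
      \<le> emeasure lborel (frequency_clusters N (A / 2) k)"
    by (rule emeasure_mono) (simp add: borel_closed[OF closed_frequency_clusters])
  also have "\<dots> \<le> ennreal (real ((4 * k + 1) * k) * A)"
    using emeasure_frequency_clusters_le[of "A / 2" N k] \<open>A \<ge> 1\<close> by simp
  also have "\<dots> \<le> ennreal (5 ^ k * A)"
    using four_k_plus_one_times_k_le_five_pow[OF \<open>k \<ge> 1\<close>] \<open>A \<ge> 1\<close>
    by (intro ennreal_leI mult_right_mono) auto
  finally show "emeasure lborel (closure {\<xi>. Uhat \<mu> (phi_hat A N R) k t \<xi> \<noteq> 0}) \<le> ennreal (5 ^ k * A)" .
qed simp

end
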